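(* Let $\Im$ be a finite simplicial graph with vertex set $X$ in which every closed path has even length, and let $G$ (resp. $M$) be the right-angled Artin group (resp. monoid) presented by generators $X$ and relations $ab=ba$ for each edge $a-b$ of $\Im$. Colour the vertices of $\Im$ black and white so that adjacent vertices have different colours; let $B$, $W$ be the sets of black and white vertices. Choose a total order on $X\cup X^{-1}$ in which every element of $B\cup B^{-1}$ is greater than every element of $W\cup W^{-1}$, and let $\Re$ be the rewriting system on $X\cup X^{-1}$ consisting of the free reduction rules $xx^{-1}\rightarrow1$, $x^{-1}x\rightarrow1$ ($x\in X$) together with the rules $a^{\gamma}b^{\epsilon}\rightarrow b^{\epsilon}a^{\gamma}$ for every edge $a-b$ of $\Im$ with $a\in B$, $b\in W$, and all $\gamma,\epsilon\in\{1,-1\}$ (these rules are oriented according to the length-lexicographical order induced by the chosen total order). Then $\Re$ is a finite complete rewriting system for $G$, it satisfies the condition $C^{+}$, and $\Re^{+}=\{ab\rightarrow ba : a-b\text{ an edge},\ a\in B,\ b\in W\}$ is a rewriting system for $M$ (i.e. $M\cong X^{*}/\equiv_{\Re^{+}}$).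
   Context: A rewriting system on an alphabet $\Sigma$ is a set of rules $l\rightarrow r$ in $\Sigma^{*}\times\Sigma^{*}$; $ulv$ reduces to $urv$. Complete means terminating (no infinite reduction chains) and confluent (words with a common ancestor under $\rightarrow^{*}$ have a common descendant). A rewriting system for $G$ is one on $X\cup X^{-1}$ whose generated congruence equals that generated by the defining relations of $G$ together with $xx^{-1}=1$, $x^{-1}x=1$ ($x\in X$). A word is positive if it lies in $X^{*}$ (empty word included). $\Re^{+}$ is the set of rules of $\Re$ with positive left-hand side. $\Re$ satisfies $C^{+}$ if $\Re^{+}\neq\emptyset$ and every rule with positive left-hand side has positive right-hand side. $\equiv_{\Re^{+}}$ is the congruence on $X^{*}$ generated by $\Re^{+}$. *)

theory Defs
  imports Main
begin

text \<open>Letters of X \<union> X^-1: a pair (x, True) is the generator x, (x, False) is x^-1.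
  Words are lists of letters; a rule l \<rightarrow> r is a pair (l, r).\<close>

type_synonym 'a letter = "'a \<times> bool"
type_synonym 'a word = "'a letter list"
type_synonym 'a rule = "'a word \<times> 'a word"

definition rstep :: "'a rule set \<Rightarrow> ('a word \<times> 'a word) set" where
  "rstep R = {(u @ l @ v, u @ r @ v) | u l r v. (l, r) \<in> R}"

definition terminating :: "'a rule set \<Rightarrow> bool" where
  "terminating R \<longleftrightarrow> \<not> (\<exists>f :: nat \<Rightarrow> 'a word. \<forall>i. (f i, f (Suc i)) \<in> rstep R)"

definition confluent :: "'a rule set \<Rightarrow> bool" where
  "confluent R \<longleftrightarrow> (\<forall>u v w. (u, v) \<in> (rstep R)\<^sup>* \<and> (u, w) \<in> (rstep R)\<^sup>* \<longrightarrow>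
      (\<exists>z. (v, z) \<in> (rstep R)\<^sup>* \<and> (w, z) \<in> (rstep R)\<^sup>*))"

definition complete :: "'a rule set \<Rightarrow> bool" where
  "complete R \<longleftrightarrow> terminating R \<and> confluent R"

definition congr_on :: "'a word set \<Rightarrow> 'a rule set \<Rightarrow> ('a word \<times> 'a word) set" where
  "congr_on S R = ((rstep R \<inter> (S \<times> S)) \<union> (rstep R \<inter> (S \<times> S))\<inverse>)\<^sup>* \<inter> (S \<times> S)"

definition letters :: "'a set \<Rightarrow> 'a letter set" where
  "letters X = X \<times> UNIV"

definition pos_letters :: "'a set \<Rightarrow> 'a letter set" where
  "pos_letters X = X \<times> {True}"

definition free_rules :: "'a set \<Rightarrow> 'a rule set" where
  "free_rules X = {([(x, True), (x, False)], []) | x. x \<in> X}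
                \<union> {([(x, False), (x, True)], []) | x. x \<in> X}"

definition raag_relations :: "'a set \<Rightarrow> ('a \<Rightarrow> 'a \<Rightarrow> bool) \<Rightarrow> 'a rule set" where
  "raag_relations X E = {([(a, True), (b, True)], [(b, True), (a, True)]) | a b.
       a \<in> X \<and> b \<in> X \<and> E a b}"

definition rewriting_system_for_group :: "'a set \<Rightarrow> 'a rule set \<Rightarrow> 'a rule set \<Rightarrow> bool" where
  "rewriting_system_for_group X Rel R \<longleftrightarrow>
     R \<subseteq> lists (letters X) \<times> lists (letters X) \<and>
     congr_on (lists (letters X)) R = congr_on (lists (letters X)) (Rel \<union> free_rules X)"

definition rewriting_system_for_monoid :: "'a set \<Rightarrow> 'a rule set \<Rightarrow> 'a rule set \<Rightarrow> bool" where
  "rewriting_system_for_monoid X Rel R \<longleftrightarrow>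
     R \<subseteq> lists (pos_letters X) \<times> lists (pos_letters X) \<and>
     congr_on (lists (pos_letters X)) R = congr_on (lists (pos_letters X)) Rel"

definition positive :: "'a set \<Rightarrow> 'a word \<Rightarrow> bool" where
  "positive X w \<longleftrightarrow> w \<in> lists (pos_letters X)"

definition pos_part :: "'a set \<Rightarrow> 'a rule set \<Rightarrow> 'a rule set" where
  "pos_part X R = {(l, r) \<in> R. positive X l}"

definition C_plus :: "'a set \<Rightarrow> 'a rule set \<Rightarrow> bool" where
  "C_plus X R \<longleftrightarrow> pos_part X R \<noteq> {} \<and> (\<forall>(l, r) \<in> pos_part X R. positive X r)"

definition simplicial_graph :: "'a set \<Rightarrow> ('a \<Rightarrow> 'a \<Rightarrow> bool) \<Rightarrow> bool" where
  "simplicial_graph X E \<longleftrightarrow> finite X \<and> (\<forall>a b. E a b \<longrightarrow> a \<in> X \<and> b \<in> X)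
     \<and> (\<forall>a b. E a b \<longrightarrow> E b a) \<and> (\<forall>a. \<not> E a a)"

definition closed_paths_even :: "('a \<Rightarrow> 'a \<Rightarrow> bool) \<Rightarrow> bool" where
  "closed_paths_even E \<longleftrightarrow> (\<forall>(vs :: 'a list). vs \<noteq> [] \<and> hd vs = last vs \<and>
     (\<forall>i. Suc i < length vs \<longrightarrow> E (vs ! i) (vs ! Suc i)) \<longrightarrow> even (length vs - 1))"

text \<open>The rewriting system of the proposition; col x = True means x is black.\<close>
definition raag_rules :: "'a set \<Rightarrow> ('a \<Rightarrow> 'a \<Rightarrow> bool) \<Rightarrow> ('a \<Rightarrow> bool) \<Rightarrow> 'a rule set" where
  "raag_rules X E col = free_rules X \<union>
     {([(a, g), (b, e)], [(b, e), (a, g)]) | a b g e.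
        E a b \<and> a \<in> X \<and> col a \<and> b \<in> X \<and> \<not> col b}"

end

theory Submission
  imports Defs
begin

text \<open>
  Termination: the length of a word plus the number of (black, white) letter pairs in this
  order strictly decreases under every rule. Confluence: by Newman's lemma it suffices to
  check local confluence, and since all left-hand sides have two letters and determine their
  right-hand side, only overlaps \<open>pqs\<close> of two left-hand sides have to be joined; a swap
  cannot overlap a swap (its middle letter would be both white and black), and the mixed
  overlaps are resolved by a second swap followed by a cancellation. Presentations: the swaps
  with inverse letters are consequences of \<open>ab = ba\<close> and free cancellation, and conversely
  every defining relation is a rule read in one of its two directions, because the colouring
  is proper. The positive rules are exactly the swaps \<open>ab \<rightarrow> ba\<close>, which therefore present
  the monoid. The proper colouring is given.
\<close>

section \<open>String rewriting\<close>

lemma rstepI: "(l, r) \<in> R \<Longrightarrow> w = u @ l @ v \<Longrightarrow> w' = u @ r @ v \<Longrightarrow> (w, w') \<in> rstep R"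
  unfolding rstep_def by blast

lemma rstep_context: "(x, y) \<in> rstep R \<Longrightarrow> (u @ x @ v, u @ y @ v) \<in> rstep R"
  unfolding rstep_def by clarsimp (metis append.assoc)

lemma rsteps_context: "(x, y) \<in> (rstep R)\<^sup>* \<Longrightarrow> (u @ x @ v, u @ y @ v) \<in> (rstep R)\<^sup>*"
  by (induction rule: rtrancl_induct) (auto intro: rtrancl_into_rtrancl rstep_context)

lemma terminating_iff_wf: "terminating R \<longleftrightarrow> wf ((rstep R)\<inverse>)"
  unfolding terminating_def wf_iff_no_infinite_down_chain by simp

lemma wf_if_weight_decreases:
  fixes f :: "'a word \<Rightarrow> nat"
  assumes "\<And>w w'. (w, w') \<in> rstep R \<Longrightarrow> f w' < f w"
  shows "wf ((rstep R)\<inverse>)"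
  by (rule wf_subset[OF wf_measure[of f]]) (auto dest: assms)

lemma newman_lemma:
  assumes wf: "wf (S\<inverse>)"
    and local_confluence: "\<And>x y z. (x, y) \<in> S \<Longrightarrow> (x, z) \<in> S \<Longrightarrow> \<exists>u. (y, u) \<in> S\<^sup>* \<and> (z, u) \<in> S\<^sup>*"
    and "(x, y) \<in> S\<^sup>*" "(x, z) \<in> S\<^sup>*"
  shows "\<exists>u. (y, u) \<in> S\<^sup>* \<and> (z, u) \<in> S\<^sup>*"
  using wf assms(3,4)
proof (induction x arbitrary: y z rule: wf_induct_rule)
  case (less x)
  show ?case
  proof (cases "x = y \<or> x = z")
    case True
    with less.prems show ?thesis by blast
  next
    case False
    obtain y1 where y1: "(x, y1) \<in> S" "(y1, y) \<in> S\<^sup>*"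
      using less.prems(1) False by (metis converse_rtranclE)
    obtain z1 where z1: "(x, z1) \<in> S" "(z1, z) \<in> S\<^sup>*"
      using less.prems(2) False by (metis converse_rtranclE)
    obtain u where u: "(y1, u) \<in> S\<^sup>*" "(z1, u) \<in> S\<^sup>*"
      using local_confluence[OF y1(1) z1(1)] by blast
    obtain t where t: "(y, t) \<in> S\<^sup>*" "(u, t) \<in> S\<^sup>*"
      using less.IH[of y1] y1 u(1) by blast
    obtain s where s: "(z, s) \<in> S\<^sup>*" "(t, s) \<in> S\<^sup>*"
      using less.IH[of z1] z1 u(2) t(2) by (meson converse_iff rtrancl_trans)
    show ?thesis
      using t(1) s by (blast intro: rtrancl_trans)
  qed
qed

section \<open>Local confluence of systems with two-letter left-hand sides\<close>

lemma two_letter_factor_positions: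
  assumes "u1 @ [p1, q1] @ x1 = u2 @ [p2, q2] @ x2" "length u1 \<le> length u2"
  shows "u2 = u1 \<and> p2 = p1 \<and> q2 = q1 \<and> x2 = x1
    \<or> u2 = u1 @ [p1] \<and> p2 = q1 \<and> x1 = q2 # x2
    \<or> (\<exists>m. u2 = u1 @ [p1, q1] @ m \<and> x1 = m @ [p2, q2] @ x2)"
proof -
  obtain m where "u2 = u1 @ m" "[p1, q1] @ x1 = m @ [p2, q2] @ x2"
    using assms by (auto simp: append_eq_append_conv2)
  then show ?thesis \<comment> \<open>cases: \<open>m\<close> empty, a single letter, at least two letters\<close>
    by (cases m rule: remdups_adj.cases) auto
qed

text \<open>Two rewrite steps at two-letter redexes of the same word, the left one first, can be
  joined: equal redexes give equal results, overlapping ones are the overlap hypothesis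
  placed in context, and disjoint ones commute.\<close>

lemma joinable_two_letter_redexes:
  assumes deterministic: "\<And>l r r'. (l, r) \<in> R \<Longrightarrow> (l, r') \<in> R \<Longrightarrow> r = r'"
    and overlaps: "\<And>p q s r1 r2. ([p, q], r1) \<in> R \<Longrightarrow> ([q, s], r2) \<in> R \<Longrightarrow>
          \<exists>z. (r1 @ [s], z) \<in> (rstep R)\<^sup>* \<and> (p # r2, z) \<in> (rstep R)\<^sup>*"
    and redexes: "u1 @ [p1, q1] @ x1 = u2 @ [p2, q2] @ x2"
      "([p1, q1], r1) \<in> R" "([p2, q2], r2) \<in> R" "length u1 \<le> length u2"
  shows "\<exists>z. (u1 @ r1 @ x1, z) \<in> (rstep R)\<^sup>* \<and> (u2 @ r2 @ x2, z) \<in> (rstep R)\<^sup>*"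
  using two_letter_factor_positions[OF redexes(1,4)]
proof (elim disjE exE conjE)
  assume "u2 = u1" "p2 = p1" "q2 = q1" "x2 = x1"
  then show ?thesis
    using deterministic redexes(2,3) by auto
next
  assume pos: "u2 = u1 @ [p1]" "p2 = q1" "x1 = q2 # x2"
  obtain z where z: "(r1 @ [q2], z) \<in> (rstep R)\<^sup>*" "(p1 # r2, z) \<in> (rstep R)\<^sup>*"
    using overlaps[OF redexes(2), of q2 r2] redexes(3) pos by auto
  then show ?thesis
    using rsteps_context[OF z(1), of u1 x2] rsteps_context[OF z(2), of u1 x2] pos by auto
next
  fix m
  assume pos: "u2 = u1 @ [p1, q1] @ m" "x1 = m @ [p2, q2] @ x2"
  have "(u1 @ r1 @ x1, u1 @ r1 @ m @ r2 @ x2) \<in> rstep R"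
    by (rule rstepI[OF redexes(3), of _ "u1 @ r1 @ m" x2]) (simp_all add: pos)
  moreover have "(u2 @ r2 @ x2, u1 @ r1 @ m @ r2 @ x2) \<in> rstep R"
    by (rule rstepI[OF redexes(2), of _ u1 "m @ r2 @ x2"]) (simp_all add: pos)
  ultimately show ?thesis
    by blast
qed

lemma local_confluence_two_letter_rules:
  assumes two_letters: "\<And>l r. (l, r) \<in> R \<Longrightarrow> length l = 2"
    and deterministic: "\<And>l r r'. (l, r) \<in> R \<Longrightarrow> (l, r') \<in> R \<Longrightarrow> r = r'"
    and overlaps: "\<And>p q s r1 r2. ([p, q], r1) \<in> R \<Longrightarrow> ([q, s], r2) \<in> R \<Longrightarrow>
          \<exists>z. (r1 @ [s], z) \<in> (rstep R)\<^sup>* \<and> (p # r2, z) \<in> (rstep R)\<^sup>*"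
    and "(w, v1) \<in> rstep R" "(w, v2) \<in> rstep R"
  shows "\<exists>z. (v1, z) \<in> (rstep R)\<^sup>* \<and> (v2, z) \<in> (rstep R)\<^sup>*"
proof -
  have two: "\<exists>p q. l = [p, q]" if "(l, r) \<in> R" for l r
    using two_letters[OF that] by (auto simp: length_Suc_conv numeral_2_eq_2)
  obtain u1 p1 q1 x1 r1 where 1: "w = u1 @ [p1, q1] @ x1" "v1 = u1 @ r1 @ x1" "([p1, q1], r1) \<in> R"
    using assms(4) two unfolding rstep_def by blast
  obtain u2 p2 q2 x2 r2 where 2: "w = u2 @ [p2, q2] @ x2" "v2 = u2 @ r2 @ x2" "([p2, q2], r2) \<in> R"
    using assms(5) two unfolding rstep_def by blast
  have same_word: "u1 @ [p1, q1] @ x1 = u2 @ [p2, q2] @ x2"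
    using 1(1) 2(1) by simp
  show ?thesis
  proof (cases "length u1 \<le> length u2")
    case True
    have "\<exists>z. (u1 @ r1 @ x1, z) \<in> (rstep R)\<^sup>* \<and> (u2 @ r2 @ x2, z) \<in> (rstep R)\<^sup>*"
      using deterministic overlaps same_word 1(3) 2(3) True by (rule joinable_two_letter_redexes)
    then show ?thesis
      using 1(2) 2(2) by blast
  next
    case False
    then have "length u2 \<le> length u1"
      by simp
    have "\<exists>z. (u2 @ r2 @ x2, z) \<in> (rstep R)\<^sup>* \<and> (u1 @ r1 @ x1, z) \<in> (rstep R)\<^sup>*"
      using deterministic overlaps same_word[symmetric] 2(3) 1(3) \<open>length u2 \<le> length u1\<close>
      by (rule joinable_two_letter_redexes)
    then show ?thesis
      using 1(2) 2(2) by blast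
  qed
qed

section \<open>Congruences generated by rewriting systems\<close>

lemma congr_on_refl: "x \<in> S \<Longrightarrow> (x, x) \<in> congr_on S R"
  unfolding congr_on_def by simp

lemma congr_on_sym: "(x, y) \<in> congr_on S R \<Longrightarrow> (y, x) \<in> congr_on S R"
proof -
  let ?A = "rstep R \<inter> (S \<times> S)"
  assume "(x, y) \<in> congr_on S R"
  then have "(y, x) \<in> ((?A \<union> ?A\<inverse>)\<inverse>)\<^sup>*" "x \<in> S" "y \<in> S"
    unfolding congr_on_def by (auto intro: rtrancl_converseI)
  then show ?thesis
    unfolding congr_on_def by (simp add: converse_Un Un_commute)
qed

lemma congr_on_trans [trans]:
  "(x, y) \<in> congr_on S R \<Longrightarrow> (y, z) \<in> congr_on S R \<Longrightarrow> (x, z) \<in> congr_on S R"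
  unfolding congr_on_def by (auto intro: rtrancl_trans)

lemma congr_on_step: "(x, y) \<in> rstep R \<Longrightarrow> x \<in> S \<Longrightarrow> y \<in> S \<Longrightarrow> (x, y) \<in> congr_on S R"
  unfolding congr_on_def by auto

lemma congr_on_rule: "(l, r) \<in> R \<Longrightarrow> l \<in> S \<Longrightarrow> r \<in> S \<Longrightarrow> (l, r) \<in> congr_on S R"
  by (rule congr_on_step[OF rstepI[of l r R l "[]" "[]"]]) auto

lemma congr_on_rule_or_converse:
  "(l, r) \<in> R \<or> (r, l) \<in> R \<Longrightarrow> l \<in> S \<Longrightarrow> r \<in> S \<Longrightarrow> (l, r) \<in> congr_on S R"
  by (metis congr_on_rule congr_on_sym)

lemma congr_on_context:
  assumes "(x, y) \<in> congr_on (lists L) R" "u \<in> lists L" "v \<in> lists L"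
  shows "(u @ x @ v, u @ y @ v) \<in> congr_on (lists L) R"
proof -
  let ?A = "rstep R \<inter> (lists L \<times> lists L)"
  have closed: "(u @ a @ v, u @ b @ v) \<in> ?A \<union> ?A\<inverse>" if "(a, b) \<in> ?A \<union> ?A\<inverse>" for a b
    using that assms(2,3) by (auto intro: rstep_context)
  have "(x, y) \<in> (?A \<union> ?A\<inverse>)\<^sup>*" "x \<in> lists L" "y \<in> lists L"
    using assms(1) unfolding congr_on_def by auto
  moreover from this(1) have "(u @ x @ v, u @ y @ v) \<in> (?A \<union> ?A\<inverse>)\<^sup>*"
  proof (induction rule: rtrancl_induct)
    case (step y z)
    then show ?case
      using closed[of y z] by (meson rtrancl.rtrancl_into_rtrancl)
  qed simp
  ultimately show ?thesis
    unfolding congr_on_def using assms(2,3) by auto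
qed

lemma congr_on_subset:
  assumes rules: "\<And>l r. (l, r) \<in> R1 \<Longrightarrow> l \<in> lists L \<Longrightarrow> r \<in> lists L \<Longrightarrow> (l, r) \<in> congr_on (lists L) R2"
  shows "congr_on (lists L) R1 \<subseteq> congr_on (lists L) R2"
proof -
  let ?A = "rstep R1 \<inter> (lists L \<times> lists L)"
  have one_step: "(a, b) \<in> congr_on (lists L) R2" if ab_step: "(a, b) \<in> ?A" for a b
  proof -
    obtain u l r v where ab: "a = u @ l @ v" "b = u @ r @ v" and lr: "(l, r) \<in> R1"
      using IntD1[OF ab_step] unfolding rstep_def by blast
    have words: "u \<in> lists L" "l \<in> lists L" "r \<in> lists L" "v \<in> lists L"
      using IntD2[OF ab_step] unfolding ab by auto
    show ?thesis
      unfolding ab using rules[OF lr words(2,3)] words(1,4) by (rule congr_on_context)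
  qed
  have "(x, y) \<in> congr_on (lists L) R2" if "(x, y) \<in> (?A \<union> ?A\<inverse>)\<^sup>*" "x \<in> lists L" for x y
    using that
  proof (induction rule: rtrancl_induct)
    case base
    then show ?case by (rule congr_on_refl)
  next
    case (step y z)
    from step.hyps(2) have "(y, z) \<in> congr_on (lists L) R2"
    proof
      assume "(y, z) \<in> ?A"
      then show ?thesis by (rule one_step)
    next
      assume "(y, z) \<in> ?A\<inverse>"
      then show ?thesis by (auto intro: congr_on_sym one_step)
    qed
    with step.IH[OF step.prems] show ?case
      by (rule congr_on_trans)
  qed
  then show ?thesis
    unfolding congr_on_def by auto
qed

lemma congr_on_eqI:
  assumes "\<And>l r. (l, r) \<in> R1 \<Longrightarrow> l \<in> lists L \<Longrightarrow> r \<in> lists L \<Longrightarrow> (l, r) \<in> congr_on (lists L) R2"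
    and "\<And>l r. (l, r) \<in> R2 \<Longrightarrow> l \<in> lists L \<Longrightarrow> r \<in> lists L \<Longrightarrow> (l, r) \<in> congr_on (lists L) R1"
  shows "congr_on (lists L) R1 = congr_on (lists L) R2"
  using congr_on_subset[of R1 L R2, OF assms(1)] congr_on_subset[of R2 L R1, OF assms(2)]
  by (rule equalityI)

text \<open>In a congruence in which the letter \<open>(a, g)\<close> cancels against its inverse on both
  sides, a letter commuting with \<open>(a, g)\<close> also commutes with the inverse letter:
  \<open>a\<^sup>-\<^sup>1 y = a\<^sup>-\<^sup>1 y a a\<^sup>-\<^sup>1 = a\<^sup>-\<^sup>1 a y a\<^sup>-\<^sup>1 = y a\<^sup>-\<^sup>1\<close>.\<close>

lemma commute_inverse_letter:
  assumes letters: "(a, g) \<in> L" "(a, \<not> g) \<in> L" "y \<in> L"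
    and cancel: "\<And>s. ([(a, s), (a, \<not> s)], []) \<in> congr_on (lists L) R"
    and commute: "([(a, g), y], [y, (a, g)]) \<in> congr_on (lists L) R"
  shows "([(a, \<not> g), y], [y, (a, \<not> g)]) \<in> congr_on (lists L) R"
proof -
  let ?C = "congr_on (lists L) R" and ?x = "(a, g)" and ?x' = "(a, \<not> g)"
  have "([?x', y], [?x', y, ?x, ?x']) \<in> ?C"
    using congr_on_context[OF congr_on_sym[OF cancel[of g]], of "[?x', y]" "[]"] letters by simp
  also have "([?x', y, ?x, ?x'], [?x', ?x, y, ?x']) \<in> ?C"
    using congr_on_context[OF congr_on_sym[OF commute], of "[?x']" "[?x']"] letters by simp
  also have "([?x', ?x, y, ?x'], [y, ?x']) \<in> ?C"
    using congr_on_context[OF cancel[of "\<not> g"], of "[]" "[y, ?x']"] letters by simp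
  finally show ?thesis .
qed

section \<open>The rewriting system of the right-angled Artin group\<close>

lemma raag_rules_cases [consumes 1, case_names cancel swap]:
  assumes "(l, r) \<in> raag_rules X E col"
  obtains (cancel) x s where "x \<in> X" "l = [(x, s), (x, \<not> s)]" "r = []"
  | (swap) a b g e where "l = [(a, g), (b, e)]" "r = [(b, e), (a, g)]"
      "E a b" "a \<in> X" "col a" "b \<in> X" "\<not> col b"
  using assms unfolding raag_rules_def free_rules_def by auto

lemma cancel_rule: "x \<in> X \<Longrightarrow> ([(x, s), (x, \<not> s)], []) \<in> raag_rules X E col"
  unfolding raag_rules_def free_rules_def by (cases s) auto

lemma swap_rule: "E a b \<Longrightarrow> a \<in> X \<Longrightarrow> col a \<Longrightarrow> b \<in> X \<Longrightarrow> \<not> col b \<Longrightarrow>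
    ([(a, g), (b, e)], [(b, e), (a, g)]) \<in> raag_rules X E col"
  unfolding raag_rules_def by blast

lemma edge_commutation_oriented:
  assumes "simplicial_graph X E" "\<forall>a b. E a b \<longrightarrow> col a \<noteq> col b" "E a b"
  shows "([(a, g), (b, e)], [(b, e), (a, g)]) \<in> raag_rules X E col
    \<or> ([(b, e), (a, g)], [(a, g), (b, e)]) \<in> raag_rules X E col"
proof -
  have "a \<in> X" "b \<in> X" "E b a" "col a \<noteq> col b"
    using assms unfolding simplicial_graph_def by auto
  then show ?thesis
    using swap_rule[of E a b X col g e] swap_rule[of E b a X col e g] assms(3)
    by (cases "col a") simp_all
qed

text \<open>The weight of a word is its length plus the number of pairs consisting of a black
  letter followed (not necessarily immediately) by a white letter. Cancellation shortens the
  word without creating such pairs, a swap removes exactly one of them.\<close>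

definition black_count :: "('a \<Rightarrow> bool) \<Rightarrow> 'a word \<Rightarrow> nat" where
  "black_count col w = length (filter (\<lambda>x. col (fst x)) w)"

definition white_count :: "('a \<Rightarrow> bool) \<Rightarrow> 'a word \<Rightarrow> nat" where
  "white_count col w = length (filter (\<lambda>x. \<not> col (fst x)) w)"

fun inversions :: "('a \<Rightarrow> bool) \<Rightarrow> 'a word \<Rightarrow> nat" where
  "inversions col [] = 0"
| "inversions col (x # w) = (if col (fst x) then white_count col w else 0) + inversions col w"

lemma inversions_append:
  "inversions col (u @ v) = inversions col u + inversions col v + black_count col u * white_count col v"
  by (induction u) (auto simp: black_count_def white_count_def algebra_simps)

definition weight :: "('a \<Rightarrow> bool) \<Rightarrow> 'a word \<Rightarrow> nat" where
  "weight col w = length w + inversions col w"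

lemma weight_decreases:
  assumes "(w, w') \<in> rstep (raag_rules X E col)"
  shows "weight col w' < weight col w"
proof -
  obtain u l r v where w: "w = u @ l @ v" "w' = u @ r @ v" and rule: "(l, r) \<in> raag_rules X E col"
    using assms unfolding rstep_def by blast
  from rule show ?thesis
  proof (cases rule: raag_rules_cases)
    case (cancel x s)
    have "white_count col v \<le> white_count col (l @ v)"
      by (simp add: white_count_def)
    then have "black_count col u * white_count col v \<le> black_count col u * white_count col (l @ v)"
      by (rule mult_le_mono2)
    then show ?thesis
      using w cancel by (simp add: weight_def inversions_append black_count_def white_count_def)
  next
    case (swap a b g e)
    then show ?thesis
      using w by (simp add: weight_def inversions_append black_count_def white_count_def)
  qed
qed

lemma raag_rules_wf: "wf ((rstep (raag_rules X E col))\<inverse>)"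
  by (rule wf_if_weight_decreases[of _ "weight col"]) (rule weight_decreases)

lemma raag_rules_two_letters: "(l, r) \<in> raag_rules X E col \<Longrightarrow> length l = 2"
  by (erule raag_rules_cases) auto

lemma raag_rules_deterministic:
  "(l, r) \<in> raag_rules X E col \<Longrightarrow> (l, r') \<in> raag_rules X E col \<Longrightarrow> r = r'"
  by (elim raag_rules_cases) auto

text \<open>The overlaps: \<open>x x\<^sup>-\<^sup>1 x\<close> reduces to \<open>x\<close> either way; \<open>a\<^sup>-\<^sup>\<gamma> a\<^sup>\<gamma> b\<^sup>\<epsilon>\<close> and
  \<open>a\<^sup>\<gamma> b\<^sup>\<epsilon> b\<^sup>-\<^sup>\<epsilon>\<close> are resolved by one more swap and cancellation; two swaps cannot
  overlap, since the middle letter would have to be both white and black.\<close>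

lemma raag_rules_overlaps:
  assumes "([p, q], r1) \<in> raag_rules X E col" "([q, s], r2) \<in> raag_rules X E col"
  shows "\<exists>z. (r1 @ [s], z) \<in> (rstep (raag_rules X E col))\<^sup>*
           \<and> (p # r2, z) \<in> (rstep (raag_rules X E col))\<^sup>*"
  using assms(1)
proof (cases rule: raag_rules_cases)
  case (cancel x t)
  from assms(2) show ?thesis
  proof (cases rule: raag_rules_cases)
    case (cancel y t')
    then show ?thesis
      using \<open>[p, q] = [(x, t), (x, \<not> t)]\<close> \<open>r1 = []\<close> by auto
  next
    case (swap a b g e)
    have "(p # r2, [(b, e), (a, \<not> g), (a, g)]) \<in> rstep (raag_rules X E col)"
      by (rule rstepI[OF swap_rule[of E a b X col "\<not> g" e], of _ "[]" "[(a, g)]"])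
        (use cancel swap in auto)
    moreover have "([(b, e), (a, \<not> g), (a, g)], [(b, e)]) \<in> rstep (raag_rules X E col)"
      by (rule rstepI[OF cancel_rule[of a X "\<not> g"], of _ "[(b, e)]" "[]"]) (use swap in auto)
    ultimately show ?thesis
      using cancel swap by (intro exI[of _ "[(b, e)]"]) auto
  qed
next
  case (swap a b g e)
  from assms(2) show ?thesis
  proof (cases rule: raag_rules_cases)
    case (cancel y t)
    have "(r1 @ [s], [(b, e), (b, \<not> e), (a, g)]) \<in> rstep (raag_rules X E col)"
      by (rule rstepI[OF swap_rule[of E a b X col g "\<not> e"], of _ "[(b, e)]" "[]"])
        (use cancel swap in auto)
    moreover have "([(b, e), (b, \<not> e), (a, g)], [(a, g)]) \<in> rstep (raag_rules X E col)"
      by (rule rstepI[OF cancel_rule[of b X e], of _ "[]" "[(a, g)]"]) (use swap in auto)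
    ultimately show ?thesis
      using cancel swap by (intro exI[of _ "[(a, g)]"]) auto
  next
    case (swap a' b' g' e')
    then show ?thesis
      using \<open>[p, q] = [(a, g), (b, e)]\<close> \<open>\<not> col b\<close> by auto
  qed
qed

lemma raag_rules_complete: "complete (raag_rules X E col)"
proof -
  let ?S = "rstep (raag_rules X E col)"
  have local_confluence: "\<exists>z. (v1, z) \<in> ?S\<^sup>* \<and> (v2, z) \<in> ?S\<^sup>*"
    if "(w, v1) \<in> ?S" "(w, v2) \<in> ?S" for w v1 v2
    using raag_rules_two_letters raag_rules_deterministic raag_rules_overlaps that
    by (rule local_confluence_two_letter_rules)
  have "\<exists>z. (v, z) \<in> ?S\<^sup>* \<and> (v', z) \<in> ?S\<^sup>*" if "(u, v) \<in> ?S\<^sup>*" "(u, v') \<in> ?S\<^sup>*" for u v v'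
    using raag_rules_wf local_confluence that by (rule newman_lemma)
  then have "confluent (raag_rules X E col)"
    unfolding confluent_def by blast
  then show ?thesis
    unfolding complete_def terminating_iff_wf using raag_rules_wf by blast
qed

lemma finite_raag_rules:
  assumes "finite X"
  shows "finite (raag_rules X E col)"
proof -
  let ?swap = "\<lambda>(a, b, g, e). ([(a, g), (b, e)], [(b, e), (a, g)])"
  have "{([(a, g), (b, e)], [(b, e), (a, g)]) | a b g e. E a b \<and> a \<in> X \<and> col a \<and> b \<in> X \<and> \<not> col b}
      \<subseteq> ?swap ` (X \<times> X \<times> (UNIV :: bool set) \<times> (UNIV :: bool set))"
    by (auto simp: image_iff)
  moreover have "finite (?swap ` (X \<times> X \<times> (UNIV :: bool set) \<times> (UNIV :: bool set)))"
    using assms by simp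
  moreover have "finite (free_rules X)"
    unfolding free_rules_def using assms by simp
  ultimately show ?thesis
    unfolding raag_rules_def by (blast intro: finite_subset)
qed

lemma edge_commutation_in_group:
  assumes "simplicial_graph X E" "E a b"
  shows "([(a, g), (b, e)], [(b, e), (a, g)])
           \<in> congr_on (lists (letters X)) (raag_relations X E \<union> free_rules X)"
proof -
  let ?C = "congr_on (lists (letters X)) (raag_relations X E \<union> free_rules X)"
  have graph: "E x y \<Longrightarrow> x \<in> X \<and> y \<in> X \<and> E y x" for x y
    using assms(1) unfolding simplicial_graph_def by blast
  have cancel: "([(x, s), (x, \<not> s)], []) \<in> ?C" if "x \<in> X" for x s
    by (rule congr_on_rule) (use that in \<open>cases s, auto simp: free_rules_def letters_def\<close>)
  have positive: "([(x, True), (y, True)], [(y, True), (x, True)]) \<in> ?C" if "E x y" for x y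
    by (rule congr_on_rule) (use that graph in \<open>auto simp: raag_relations_def letters_def\<close>)
  have sign_change: "([(x, s), y], [y, (x, s)]) \<in> ?C"
    if "([(x, True), y], [y, (x, True)]) \<in> ?C" "x \<in> X" "y \<in> letters X" for x y s
    using commute_inverse_letter[OF _ _ _ cancel[OF that(2)] that(1)] that
    by (cases s) (auto simp: letters_def)
  have "([(a, g), (b, True)], [(b, True), (a, g)]) \<in> ?C"
    using sign_change[OF positive[OF assms(2)]] graph[OF assms(2)] by (simp add: letters_def)
  then have "([(b, e), (a, g)], [(a, g), (b, e)]) \<in> ?C"
    using sign_change[OF congr_on_sym] graph[OF assms(2)] by (simp add: letters_def)
  then show ?thesis
    by (rule congr_on_sym)
qed

theorem raag_rules_present_group:
  assumes "simplicial_graph X E" "\<forall>a b. E a b \<longrightarrow> col a \<noteq> col b"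
  shows "rewriting_system_for_group X (raag_relations X E) (raag_rules X E col)"
  unfolding rewriting_system_for_group_def
proof
  show "raag_rules X E col \<subseteq> lists (letters X) \<times> lists (letters X)"
    unfolding raag_rules_def free_rules_def letters_def by auto
  show "congr_on (lists (letters X)) (raag_rules X E col)
      = congr_on (lists (letters X)) (raag_relations X E \<union> free_rules X)"
  proof (rule congr_on_eqI)
    fix l r
    assume "(l, r) \<in> raag_rules X E col" "l \<in> lists (letters X)" "r \<in> lists (letters X)"
    then show "(l, r) \<in> congr_on (lists (letters X)) (raag_relations X E \<union> free_rules X)"
    proof (cases rule: raag_rules_cases)
      case (cancel x s)
      have "(l, r) \<in> free_rules X"
        using cancel unfolding free_rules_def by (cases s) auto
      then show ?thesis
        using \<open>l \<in> lists (letters X)\<close> \<open>r \<in> lists (letters X)\<close> by (intro congr_on_rule) auto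
    next
      case (swap a b g e)
      then show ?thesis
        using edge_commutation_in_group[OF assms(1)] by simp
    qed
  next
    fix l r
    assume rel: "(l, r) \<in> raag_relations X E \<union> free_rules X"
      and words: "l \<in> lists (letters X)" "r \<in> lists (letters X)"
    have "(l, r) \<in> raag_rules X E col \<or> (r, l) \<in> raag_rules X E col"
    proof (cases "(l, r) \<in> free_rules X")
      case True
      then show ?thesis
        unfolding raag_rules_def by blast
    next
      case False
      then obtain a b where "l = [(a, True), (b, True)]" "r = [(b, True), (a, True)]" "E a b"
        using rel unfolding raag_relations_def by blast
      then show ?thesis
        using edge_commutation_oriented[OF assms] by simp
    qed
    then show "(l, r) \<in> congr_on (lists (letters X)) (raag_rules X E col)"
      using words by (rule congr_on_rule_or_converse)
  qed
qed

lemma pos_part_raag_rules: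
  "pos_part X (raag_rules X E col) =
     {([(a, True), (b, True)], [(b, True), (a, True)]) | a b. E a b \<and> a \<in> X \<and> col a \<and> b \<in> X \<and> \<not> col b}"
  unfolding pos_part_def positive_def pos_letters_def raag_rules_def free_rules_def by auto

theorem pos_part_presents_monoid:
  assumes "simplicial_graph X E" "\<forall>a b. E a b \<longrightarrow> col a \<noteq> col b"
  shows "rewriting_system_for_monoid X (raag_relations X E) (pos_part X (raag_rules X E col))"
  unfolding rewriting_system_for_monoid_def
proof
  show "pos_part X (raag_rules X E col) \<subseteq> lists (pos_letters X) \<times> lists (pos_letters X)"
    unfolding pos_part_raag_rules pos_letters_def by auto
  show "congr_on (lists (pos_letters X)) (pos_part X (raag_rules X E col))
      = congr_on (lists (pos_letters X)) (raag_relations X E)"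
  proof (rule congr_on_eqI)
    fix l r
    assume "(l, r) \<in> pos_part X (raag_rules X E col)"
      "l \<in> lists (pos_letters X)" "r \<in> lists (pos_letters X)"
    then show "(l, r) \<in> congr_on (lists (pos_letters X)) (raag_relations X E)"
      by (intro congr_on_rule) (auto simp: pos_part_raag_rules raag_relations_def)
  next
    fix l r
    assume rel: "(l, r) \<in> raag_relations X E"
      and words: "l \<in> lists (pos_letters X)" "r \<in> lists (pos_letters X)"
    have "(l, r) \<in> raag_rules X E col \<or> (r, l) \<in> raag_rules X E col"
      using rel edge_commutation_oriented[OF assms] unfolding raag_relations_def by blast
    then have "(l, r) \<in> pos_part X (raag_rules X E col) \<or> (r, l) \<in> pos_part X (raag_rules X E col)"
      using words by (auto simp: pos_part_def positive_def)
    then show "(l, r) \<in> congr_on (lists (pos_letters X)) (pos_part X (raag_rules X E col))"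
      using words by (rule congr_on_rule_or_converse)
  qed
qed

lemma raag_rules_C_plus:
  assumes "simplicial_graph X E" "\<forall>a b. E a b \<longrightarrow> col a \<noteq> col b" "E a b"
  shows "C_plus X (raag_rules X E col)"
proof -
  have "a \<in> X" "b \<in> X"
    using assms(1,3) unfolding simplicial_graph_def by auto
  then have "pos_part X (raag_rules X E col) \<noteq> {}"
    using edge_commutation_oriented[OF assms, of True True]
    by (auto simp: pos_part_def positive_def pos_letters_def)
  moreover have "\<forall>(l, r) \<in> pos_part X (raag_rules X E col). positive X r"
    unfolding pos_part_raag_rules positive_def pos_letters_def by auto
  ultimately show ?thesis
    unfolding C_plus_def by blast
qed

theorem propositionB4:
  fixes X :: "'a set" and E :: "'a \<Rightarrow> 'a \<Rightarrow> bool" and col :: "'a \<Rightarrow> bool"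
  assumes "simplicial_graph X E"
    and "closed_paths_even E"
    and "\<forall>a b. E a b \<longrightarrow> col a \<noteq> col b"
    and "\<exists>a b. E a b"
  shows "finite (raag_rules X E col)
    \<and> complete (raag_rules X E col)
    \<and> rewriting_system_for_group X (raag_relations X E) (raag_rules X E col)
    \<and> C_plus X (raag_rules X E col)
    \<and> pos_part X (raag_rules X E col) =
        {([(a, True), (b, True)], [(b, True), (a, True)]) | a b.
           E a b \<and> a \<in> X \<and> col a \<and> b \<in> X \<and> \<not> col b}
    \<and> rewriting_system_for_monoid X (raag_relations X E) (pos_part X (raag_rules X E col))"
proof (intro conjI)
  show "finite (raag_rules X E col)"
    using assms(1) finite_raag_rules unfolding simplicial_graph_def by blast
  show "complete (raag_rules X E col)"
    by (rule raag_rules_complete)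
  show "rewriting_system_for_group X (raag_relations X E) (raag_rules X E col)"
    using assms(1,3) by (rule raag_rules_present_group)
  obtain a b where "E a b"
    using assms(4) by blast
  with assms(1,3) show "C_plus X (raag_rules X E col)"
    by (rule raag_rules_C_plus)
  show "pos_part X (raag_rules X E col) =
      {([(a, True), (b, True)], [(b, True), (a, True)]) | a b. E a b \<and> a \<in> X \<and> col a \<and> b \<in> X \<and> \<not> col b}"
    by (rule pos_part_raag_rules)
  show "rewriting_system_for_monoid X (raag_relations X E) (pos_part X (raag_rules X E col))"
    using assms(1,3) by (rule pos_part_presents_monoid)
qed

end
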